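(* Let $R$, $G$, $*$, $\sigma$ and $\mathcal{S}$ be as in the context, and suppose $\mathcal{S}$ is anticommutative. Let $y\in G_*$, $x\in G\setminus G_*$, and $\alpha\in R$ with $\alpha y\in\mathcal{S}$. Then: - (i) $x^y\in\{x,x^*\}$; - (ii) $xy\in G_*$ if and only if $xy\neq yx$; - (iii) if $xy\neq yx$, then $\alpha(1+\sigma(x))=0$; if $xy=yx$, then $2\alpha=0$; - (iv) $(x,y^2)=(x^2,y)=(xx^*,y)=1$.
   Context: Throughout, $R$ is a commutative ring with unity with $\operatorname{char}(R)\neq 2$, and $\mathcal{U}(R)$ is its unit group. $G$ is a group with an involution $*$, i.e. a map $x\mapsto x^*$ with $(xy)^*=y^*x^*$ and $(x^* )^*=x$. The map $\sigma:G\to\mathcal{U}(R)$ is a nontrivial group homomorphism with kernel $N=\ker\sigma$, and it is compatible with $*$: $xx^*\in N$ for all $x\in G$. The group ring $RG$ carries the involution $\left(\sum_{x\in G}\alpha_x x\right)^{\sigma*}=\sum_{x\in G}\sigma(x)\alpha_x x^*$. Write $G_*=\{x\in G: x^*=x\}$ and $N_*=G_*\cap N$. Let $\mathcal{S}$ be the $R$-submodule of $RG$ spanned by the union of the following three sets: - $2\mathcal{S}_1=\{2x: x\in N_*\}$; - $\mathcal{S}_2=\{\alpha x: x\in G_*\setminus N,\ \alpha\in R,\ \alpha(1-\sigma(x))=0\}$; - $\mathcal{S}_3=\{x+\sigma(x)x^*: x\in G\setminus G_*\}$. $\mathcal{S}$ is called anticommutative if $ab+ba=0$ for all $a,b\in\mathcal{S}$.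 The conjugate of $x$ by $y$ is $x^y=y^{-1}xy$, and the commutator is $(x,y)=x^{-1}y^{-1}xy$. *)

theory Defs
  imports "HOL-Algebra.Group"
begin

text \<open>Group ring elements of RG are represented as finitely supported functions
  carrier G \<rightarrow> R (zero outside the carrier); only the multiplication and the
  R-submodule S are needed.\<close>

definition gr_basis :: "('g, 'm) monoid_scheme \<Rightarrow> 'g \<Rightarrow> 'r::comm_ring_1 \<Rightarrow> 'g \<Rightarrow> 'r" where
  "gr_basis G x \<alpha> = (\<lambda>z. if z = x then \<alpha> else 0)"

definition gr_mult :: "('g, 'm) monoid_scheme \<Rightarrow> ('g \<Rightarrow> 'r::comm_ring_1) \<Rightarrow> ('g \<Rightarrow> 'r) \<Rightarrow> 'g \<Rightarrow> 'r" where
  "gr_mult G a b = (\<lambda>z. if z \<in> carrier G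
      then (\<Sum>x\<in>{x\<in>carrier G. a x \<noteq> 0}. a x * b (inv\<^bsub>G\<^esub> x \<otimes>\<^bsub>G\<^esub> z)) else 0)"

inductive_set rspan :: "('g \<Rightarrow> 'r::comm_ring_1) set \<Rightarrow> ('g \<Rightarrow> 'r) set" for A where
  zero: "(\<lambda>_. 0) \<in> rspan A"
| step: "a \<in> A \<Longrightarrow> b \<in> rspan A \<Longrightarrow> (\<lambda>z. r * a z + b z) \<in> rspan A"

definition involution_on :: "('g, 'm) monoid_scheme \<Rightarrow> ('g \<Rightarrow> 'g) \<Rightarrow> bool" where
  "involution_on G star \<longleftrightarrow> (\<forall>x\<in>carrier G. star x \<in> carrier G \<and> star (star x) = x) \<and>
     (\<forall>x\<in>carrier G. \<forall>y\<in>carrier G. star (x \<otimes>\<^bsub>G\<^esub> y) = star y \<otimes>\<^bsub>G\<^esub> star x)"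

definition unit_hom :: "('g, 'm) monoid_scheme \<Rightarrow> ('g \<Rightarrow> 'r::comm_ring_1) \<Rightarrow> bool" where
  "unit_hom G \<sigma> \<longleftrightarrow> (\<forall>x\<in>carrier G. \<sigma> x dvd 1) \<and>
     (\<forall>x\<in>carrier G. \<forall>y\<in>carrier G. \<sigma> (x \<otimes>\<^bsub>G\<^esub> y) = \<sigma> x * \<sigma> y)"

definition Gstar :: "('g, 'm) monoid_scheme \<Rightarrow> ('g \<Rightarrow> 'g) \<Rightarrow> 'g set" where
  "Gstar G star = {x\<in>carrier G. star x = x}"

definition kerN :: "('g, 'm) monoid_scheme \<Rightarrow> ('g \<Rightarrow> 'r::comm_ring_1) \<Rightarrow> 'g set" where
  "kerN G \<sigma> = {x\<in>carrier G. \<sigma> x = 1}"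

definition S_gens :: "('g, 'm) monoid_scheme \<Rightarrow> ('g \<Rightarrow> 'g) \<Rightarrow> ('g \<Rightarrow> 'r::comm_ring_1) \<Rightarrow> ('g \<Rightarrow> 'r) set" where
  "S_gens G star \<sigma> =
     {gr_basis G x 2 | x. x \<in> Gstar G star \<inter> kerN G \<sigma>}
   \<union> {gr_basis G x \<alpha> | x \<alpha>. x \<in> Gstar G star - kerN G \<sigma> \<and> \<alpha> * (1 - \<sigma> x) = 0}
   \<union> {(\<lambda>z. gr_basis G x 1 z + gr_basis G (star x) (\<sigma> x) z) | x. x \<in> carrier G - Gstar G star}"

definition S_mod :: "('g, 'm) monoid_scheme \<Rightarrow> ('g \<Rightarrow> 'g) \<Rightarrow> ('g \<Rightarrow> 'r::comm_ring_1) \<Rightarrow> ('g \<Rightarrow> 'r) set" where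
  "S_mod G star \<sigma> = rspan (S_gens G star \<sigma>)"

definition anticommutative :: "('g, 'm) monoid_scheme \<Rightarrow> ('g \<Rightarrow> 'r::comm_ring_1) set \<Rightarrow> bool" where
  "anticommutative G S \<longleftrightarrow> (\<forall>a\<in>S. \<forall>b\<in>S. (\<lambda>z. gr_mult G a b z + gr_mult G b a z) = (\<lambda>_. 0))"

definition conjg :: "('g, 'm) monoid_scheme \<Rightarrow> 'g \<Rightarrow> 'g \<Rightarrow> 'g" where
  "conjg G x y = inv\<^bsub>G\<^esub> y \<otimes>\<^bsub>G\<^esub> x \<otimes>\<^bsub>G\<^esub> y"

definition commg :: "('g, 'm) monoid_scheme \<Rightarrow> 'g \<Rightarrow> 'g \<Rightarrow> 'g" where
  "commg G x y = inv\<^bsub>G\<^esub> x \<otimes>\<^bsub>G\<^esub> inv\<^bsub>G\<^esub> y \<otimes>\<^bsub>G\<^esub> x \<otimes>\<^bsub>G\<^esub> y"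

end

theory Submission imports Defs begin

text \<open>Everything is read off from single coefficients of anticommutators in \<open>RG\<close>.
  For \<open>u \<notin> G\<^sub>*\<close> the coefficients of \<open>(u + \<sigma>(u)u\<^sup>*)\<^sup>2\<close> at \<open>uu\<^sup>*\<close> and \<open>u\<^sup>2\<close> force
  \<open>uu\<^sup>* = u\<^sup>*u\<close>, \<open>(u\<^sup>*)\<^sup>2 = u\<^sup>2\<close> and \<open>4 = 0\<close>. For two non-commuting \<open>u, v \<notin> G\<^sub>*\<close> the
  coefficient of \<open>uv\<close> in the anticommutator of their generators shows that otherwise
  \<open>w = uv\<close> would be symmetric with \<open>\<sigma>(w) = -1\<close>; then \<open>2w \<in> \<S>\<close> (as \<open>4 = 0\<close>), and the
  coefficient of \<open>uw\<close> in the anticommutator of \<open>u + \<sigma>(u)u\<^sup>*\<close> and \<open>2w\<close> is \<open>2 \<noteq> 0\<close>.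
  Hence \<open>uv \<in> {u\<^sup>*v\<^sup>*, vu\<^sup>*, v\<^sup>*u}\<close>. Applied to \<open>x\<close> and \<open>xy\<close> this shows that conjugation
  by a symmetric \<open>y\<close> either fixes or swaps \<open>x\<close> and \<open>x\<^sup>*\<close>, which gives (i), (ii) and (iv);
  (iii) is the coefficient of \<open>xy\<close> in the anticommutator of \<open>x + \<sigma>(x)x\<^sup>*\<close> and \<open>\<alpha>y\<close>.\<close>

lemma (in group) gr_mult_finite_support:
  assumes "finite F" "F \<subseteq> carrier G" "\<forall>x\<in>carrier G - F. a x = 0" "z \<in> carrier G"
  shows "gr_mult G a b z = (\<Sum>x\<in>F. a x * b (inv x \<otimes> z))"
proof -
  have "{x\<in>carrier G. a x \<noteq> 0} \<subseteq> F" using assms(3) by blast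
  then have "(\<Sum>x\<in>{x\<in>carrier G. a x \<noteq> 0}. a x * b (inv x \<otimes> z)) = (\<Sum>x\<in>F. a x * b (inv x \<otimes> z))"
    by (rule sum.mono_neutral_left[OF assms(1)]) (use assms(2) in auto)
  then show ?thesis using assms(4) by (simp add: gr_mult_def)
qed

lemma (in group) gr_mult_basis_left:
  assumes "g \<in> carrier G" "z \<in> carrier G"
  shows "gr_mult G (gr_basis G g c) b z = c * b (inv g \<otimes> z)"
  using gr_mult_finite_support[of "{g}" "gr_basis G g c" z b] assms by (simp add: gr_basis_def)

lemma (in group) gr_mult_basis_sum_left:
  assumes "g \<in> carrier G" "h \<in> carrier G" "g \<noteq> h" "z \<in> carrier G"
  shows "gr_mult G (\<lambda>z. gr_basis G g c z + gr_basis G h d z) b z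
    = c * b (inv g \<otimes> z) + d * b (inv h \<otimes> z)"
  using gr_mult_finite_support[of "{g,h}" "\<lambda>z. gr_basis G g c z + gr_basis G h d z" z b] assms
  by (simp add: gr_basis_def)

lemma (in group) commg_eq_one_iff:
  assumes "a \<in> carrier G" "b \<in> carrier G"
  shows "commg G a b = \<one> \<longleftrightarrow> a \<otimes> b = b \<otimes> a"
proof -
  have "commg G a b = inv (b \<otimes> a) \<otimes> (a \<otimes> b)"
    using assms by (simp add: commg_def inv_mult_group m_assoc)
  moreover have "inv (b \<otimes> a) \<otimes> (a \<otimes> b) = \<one> \<longleftrightarrow> a \<otimes> b = (b \<otimes> a) \<otimes> \<one>"
    by (rule inv_solve_left') (use assms in auto)
  ultimately show ?thesis using assms by simp
qed

lemma (in group) conjg_eq_iff: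
  assumes "a \<in> carrier G" "b \<in> carrier G" "c \<in> carrier G"
  shows "conjg G a b = c \<longleftrightarrow> a \<otimes> b = b \<otimes> c"
  using assms by (simp add: conjg_def m_assoc inv_solve_left')

locale anticommutative_S = group G for G :: "('g, 'm) monoid_scheme" (structure) +
  fixes star :: "'g \<Rightarrow> 'g" and \<sigma> :: "'g \<Rightarrow> 'r::comm_ring_1"
  assumes two_nonzero: "(2::'r) \<noteq> 0"
    and involution: "involution_on G star"
    and unit_hom: "unit_hom G \<sigma>"
    and anticommutative: "anticommutative G (S_mod G star \<sigma>)"
begin

lemma one_nonzero: "(1::'r) \<noteq> 0"
  using two_nonzero by (metis one_add_one add_0)

lemma star_closed [simp]: "x \<in> carrier G \<Longrightarrow> star x \<in> carrier G"
  using involution by (simp add: involution_on_def)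

lemma star_star [simp]: "x \<in> carrier G \<Longrightarrow> star (star x) = x"
  using involution by (simp add: involution_on_def)

lemma star_mult: "x \<in> carrier G \<Longrightarrow> y \<in> carrier G \<Longrightarrow> star (x \<otimes> y) = star y \<otimes> star x"
  using involution by (simp add: involution_on_def)

lemma sigma_mult: "x \<in> carrier G \<Longrightarrow> y \<in> carrier G \<Longrightarrow> \<sigma> (x \<otimes> y) = \<sigma> x * \<sigma> y"
  using unit_hom by (simp add: unit_hom_def)

lemma mult_sigma_eq_zero:
  assumes "x \<in> carrier G" "c * \<sigma> x = 0"
  shows "c = 0"
proof -
  obtain k where "1 = \<sigma> x * k"
    using unit_hom assms(1) unfolding unit_hom_def by (meson dvdE)
  then have "c = c * \<sigma> x * k" by (simp add: mult.assoc)
  with assms(2) show ?thesis by simp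
qed

definition plus_star :: "'g \<Rightarrow> 'g \<Rightarrow> 'r" where
  "plus_star u = (\<lambda>z. gr_basis G u 1 z + gr_basis G (star u) (\<sigma> u) z)"

lemma gen_in_S_mod: "a \<in> S_gens G star \<sigma> \<Longrightarrow> a \<in> S_mod G star \<sigma>"
  unfolding S_mod_def using rspan.step[OF _ rspan.zero, of a _ 1] by simp

lemma plus_star_in_S_mod: "u \<in> carrier G \<Longrightarrow> star u \<noteq> u \<Longrightarrow> plus_star u \<in> S_mod G star \<sigma>"
  by (rule gen_in_S_mod) (auto simp: S_gens_def Gstar_def plus_star_def)

lemma basis_in_S_mod:
  "w \<in> carrier G \<Longrightarrow> star w = w \<Longrightarrow> \<sigma> w \<noteq> 1 \<Longrightarrow> \<beta> * (1 - \<sigma> w) = 0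
    \<Longrightarrow> gr_basis G w \<beta> \<in> S_mod G star \<sigma>"
  by (rule gen_in_S_mod) (auto simp: S_gens_def Gstar_def kerN_def)

lemma anticommute_at:
  "a \<in> S_mod G star \<sigma> \<Longrightarrow> b \<in> S_mod G star \<sigma> \<Longrightarrow> gr_mult G a b z + gr_mult G b a z = 0"
  using anticommutative unfolding anticommutative_def by (metis (no_types, lifting))

lemma gr_mult_plus_star_plus_star:
  assumes "u \<in> carrier G" "v \<in> carrier G" "star u \<noteq> u" "z \<in> carrier G"
  shows "gr_mult G (plus_star u) (plus_star v) z
    = (if z = u \<otimes> v then 1 else 0) + (if z = u \<otimes> star v then \<sigma> v else 0)
      + \<sigma> u * ((if z = star u \<otimes> v then 1 else 0) + (if z = star u \<otimes> star v then \<sigma> v else 0))"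
proof -
  have "gr_mult G (plus_star u) (plus_star v) z
      = 1 * plus_star v (inv u \<otimes> z) + \<sigma> u * plus_star v (inv (star u) \<otimes> z)"
    unfolding plus_star_def[of u] using assms by (intro gr_mult_basis_sum_left) auto
  then show ?thesis using assms by (simp add: plus_star_def gr_basis_def inv_solve_left')
qed

lemma gr_mult_plus_star_basis:
  assumes "u \<in> carrier G" "w \<in> carrier G" "star u \<noteq> u" "z \<in> carrier G"
  shows "gr_mult G (plus_star u) (gr_basis G w \<beta>) z
    = (if z = u \<otimes> w then \<beta> else 0) + \<sigma> u * (if z = star u \<otimes> w then \<beta> else 0)"
proof -
  have "gr_mult G (plus_star u) (gr_basis G w \<beta>) z
      = 1 * gr_basis G w \<beta> (inv u \<otimes> z) + \<sigma> u * gr_basis G w \<beta> (inv (star u) \<otimes> z)"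
    unfolding plus_star_def[of u] using assms by (intro gr_mult_basis_sum_left) auto
  then show ?thesis using assms by (simp add: gr_basis_def inv_solve_left')
qed

lemma gr_mult_basis_plus_star:
  assumes "u \<in> carrier G" "w \<in> carrier G" "z \<in> carrier G"
  shows "gr_mult G (gr_basis G w \<beta>) (plus_star u) z
    = \<beta> * ((if z = w \<otimes> u then 1 else 0) + (if z = w \<otimes> star u then \<sigma> u else 0))"
proof -
  have "gr_mult G (gr_basis G w \<beta>) (plus_star u) z = \<beta> * plus_star u (inv w \<otimes> z)"
    using assms by (simp add: gr_mult_basis_left)
  then show ?thesis using assms by (simp add: plus_star_def gr_basis_def inv_solve_left')
qed

lemma double_plus_star_square:
  assumes "u \<in> carrier G" "star u \<noteq> u"
  shows "2 * gr_mult G (plus_star u) (plus_star u) z = 0"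
  unfolding mult_2 by (intro anticommute_at plus_star_in_S_mod assms)

lemma nonsym_commutes_with_star:
  assumes u: "u \<in> carrier G" "star u \<noteq> u"
  shows "u \<otimes> star u = star u \<otimes> u"
proof (rule ccontr)
  assume ne: "u \<otimes> star u \<noteq> star u \<otimes> u"
  have "u \<otimes> star u \<noteq> u \<otimes> u" "u \<otimes> star u \<noteq> star u \<otimes> star u" using u by auto
  then have "gr_mult G (plus_star u) (plus_star u) (u \<otimes> star u) = \<sigma> u"
    using gr_mult_plus_star_plus_star[OF u(1) u(1) u(2), of "u \<otimes> star u"] u ne by simp
  then have "2 * \<sigma> u = 0" using double_plus_star_square[OF u, of "u \<otimes> star u"] by simp
  then show False using mult_sigma_eq_zero[OF u(1), of 2] two_nonzero by simp
qed

lemma four_eq_zero: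
  assumes u: "u \<in> carrier G" "star u \<noteq> u"
  shows "(4::'r) = 0"
proof -
  have "u \<otimes> star u \<noteq> u \<otimes> u" "u \<otimes> star u \<noteq> star u \<otimes> star u" using u by auto
  then have "gr_mult G (plus_star u) (plus_star u) (u \<otimes> star u) = \<sigma> u + \<sigma> u"
    using gr_mult_plus_star_plus_star[OF u(1) u(1) u(2), of "u \<otimes> star u"] u
      nonsym_commutes_with_star[OF u] by simp
  then have "2 * (2 * \<sigma> u) = 0"
    using double_plus_star_square[OF u, of "u \<otimes> star u"] by (simp only: mult_2)
  then have "4 * \<sigma> u = 0" by (simp add: mult.assoc[symmetric])
  then show ?thesis using mult_sigma_eq_zero[OF u(1), of 4] by simp
qed

lemma star_square_eq_square:
  assumes u: "u \<in> carrier G" "star u \<noteq> u"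
  shows "star u \<otimes> star u = u \<otimes> u"
proof (rule ccontr)
  assume "star u \<otimes> star u \<noteq> u \<otimes> u"
  moreover have "u \<otimes> u \<noteq> u \<otimes> star u" "u \<otimes> u \<noteq> star u \<otimes> u" using u by auto
  ultimately have "gr_mult G (plus_star u) (plus_star u) (u \<otimes> u) = 1"
    using gr_mult_plus_star_plus_star[OF u(1) u(1) u(2), of "u \<otimes> u"] u by auto
  then show False using double_plus_star_square[OF u, of "u \<otimes> u"] two_nonzero by simp
qed

lemma symmetric_product_of_nonsym:
  assumes u: "u \<in> carrier G" "star u \<noteq> u" and v: "v \<in> carrier G" "star v \<noteq> v"
    and nc: "u \<otimes> v \<noteq> v \<otimes> u"
    and a1: "u \<otimes> v \<noteq> star u \<otimes> star v" and a2: "u \<otimes> v \<noteq> v \<otimes> star u"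
    and a3: "u \<otimes> v \<noteq> star v \<otimes> u"
  shows "star (u \<otimes> v) = u \<otimes> v \<and> \<sigma> (u \<otimes> v) = - 1"
proof -
  have "u \<otimes> v \<noteq> u \<otimes> star v" "u \<otimes> v \<noteq> star u \<otimes> v" using u v by auto
  then have "gr_mult G (plus_star u) (plus_star v) (u \<otimes> v) = 1"
    using gr_mult_plus_star_plus_star[OF u(1) v(1) u(2), of "u \<otimes> v"] u v a1 by simp
  moreover have "gr_mult G (plus_star v) (plus_star u) (u \<otimes> v)
      = (if u \<otimes> v = star v \<otimes> star u then \<sigma> v * \<sigma> u else 0)"
    using gr_mult_plus_star_plus_star[OF v(1) u(1) v(2), of "u \<otimes> v"] u v nc a2 a3 by simp
  moreover have "gr_mult G (plus_star u) (plus_star v) (u \<otimes> v)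
      + gr_mult G (plus_star v) (plus_star u) (u \<otimes> v) = 0"
    by (intro anticommute_at plus_star_in_S_mod u v)
  ultimately have "u \<otimes> v = star v \<otimes> star u" and "1 + \<sigma> u * \<sigma> v = 0"
    using one_nonzero by (auto split: if_splits simp: mult.commute)
  then show ?thesis
    using u v star_mult[OF u(1) v(1)] sigma_mult[OF u(1) v(1)]
    by (metis add.commute eq_neg_iff_add_eq_0)
qed

lemma noncommuting_nonsym_product:
  assumes u: "u \<in> carrier G" "star u \<noteq> u" and v: "v \<in> carrier G" "star v \<noteq> v"
    and nc: "u \<otimes> v \<noteq> v \<otimes> u"
  shows "u \<otimes> v = star u \<otimes> star v \<or> u \<otimes> v = v \<otimes> star u \<or> u \<otimes> v = star v \<otimes> u"
proof (rule ccontr)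
  assume "\<not> ?thesis"
  then have a2: "u \<otimes> v \<noteq> v \<otimes> star u"
    and sym: "star (u \<otimes> v) = u \<otimes> v" and sigma: "\<sigma> (u \<otimes> v) = - 1"
    using symmetric_product_of_nonsym[OF u v nc] by auto
  have "\<sigma> (u \<otimes> v) \<noteq> 1"
    using sigma two_nonzero by (metis add.inverse_inverse eq_neg_iff_add_eq_0 one_add_one)
  moreover have "2 * (1 - \<sigma> (u \<otimes> v)) = 0"
    using sigma four_eq_zero[OF u] by simp
  ultimately have "gr_basis G (u \<otimes> v) 2 \<in> S_mod G star \<sigma>"
    using u v sym by (intro basis_in_S_mod) auto
  then have "gr_mult G (plus_star u) (gr_basis G (u \<otimes> v) 2) (u \<otimes> (u \<otimes> v))
      + gr_mult G (gr_basis G (u \<otimes> v) 2) (plus_star u) (u \<otimes> (u \<otimes> v)) = 0"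
    by (intro anticommute_at plus_star_in_S_mod u)
  moreover have "u \<otimes> (u \<otimes> v) \<noteq> (u \<otimes> v) \<otimes> u" "u \<otimes> (u \<otimes> v) \<noteq> (u \<otimes> v) \<otimes> star u"
    using u v nc a2 by (auto simp: m_assoc)
  moreover have "u \<otimes> (u \<otimes> v) \<noteq> star u \<otimes> (u \<otimes> v)" using u v by auto
  ultimately show False
    using gr_mult_plus_star_basis[OF u(1) _ u(2), of "u \<otimes> v" "u \<otimes> (u \<otimes> v)" 2]
      gr_mult_basis_plus_star[OF u(1), of "u \<otimes> v" "u \<otimes> (u \<otimes> v)" 2] u v two_nonzero
    by simp
qed

lemma conj_swap_if_noncommuting:
  assumes x: "x \<in> carrier G" "star x \<noteq> x" and y: "y \<in> carrier G" "star y = y"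
    and xy: "star (x \<otimes> y) \<noteq> x \<otimes> y" and nc: "x \<otimes> y \<noteq> y \<otimes> x"
  shows "y \<otimes> x = star x \<otimes> y"
proof -
  have "(x \<otimes> y) \<otimes> x \<noteq> x \<otimes> (x \<otimes> y)" using nc x y by (simp add: m_assoc)
  then have "(x \<otimes> y) \<otimes> x = (y \<otimes> star x) \<otimes> star x \<or> (x \<otimes> y) \<otimes> x = x \<otimes> (y \<otimes> star x)
      \<or> (x \<otimes> y) \<otimes> x = star x \<otimes> (x \<otimes> y)"
    using noncommuting_nonsym_product[OF _ xy x] x y by (simp add: star_mult)
  moreover have "(x \<otimes> y) \<otimes> x \<noteq> (y \<otimes> star x) \<otimes> star x"
  proof -
    have "(y \<otimes> star x) \<otimes> star x = (y \<otimes> x) \<otimes> x"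
      using star_square_eq_square[OF x] x y by (simp add: m_assoc)
    then show ?thesis using nc x y by simp
  qed
  moreover have "(x \<otimes> y) \<otimes> x \<noteq> x \<otimes> (y \<otimes> star x)"
    using x y by (simp add: m_assoc)
  moreover have "star x \<otimes> (x \<otimes> y) = x \<otimes> (star x \<otimes> y)"
    using nonsym_commutes_with_star[OF x] x y by (simp add: m_assoc[symmetric])
  ultimately have "x \<otimes> (y \<otimes> x) = x \<otimes> (star x \<otimes> y)"
    using x y by (simp add: m_assoc)
  then show ?thesis using x y by simp
qed

lemma nonsym_times_sym_commutes:
  assumes x: "x \<in> carrier G" "star x \<noteq> x" and y: "y \<in> carrier G" "star y = y"
    and xy: "star (x \<otimes> y) \<noteq> x \<otimes> y"
  shows "x \<otimes> y = y \<otimes> x"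
proof (rule ccontr)
  assume nc: "x \<otimes> y \<noteq> y \<otimes> x"
  have x': "star x \<in> carrier G" using x by simp
  have swap: "y \<otimes> x = star x \<otimes> y" by (rule conj_swap_if_noncommuting[OF x y xy nc])
  have "x \<otimes> (x \<otimes> y) = star x \<otimes> (star x \<otimes> y)"
    using star_square_eq_square[OF x] x y by (simp add: m_assoc[symmetric])
  also have "\<dots> = y \<otimes> (x \<otimes> x)"
    using x' x y swap by (metis m_assoc)
  finally have xxy: "x \<otimes> (x \<otimes> y) = y \<otimes> (x \<otimes> x)" .
  have "x \<otimes> (x \<otimes> y) \<noteq> (x \<otimes> y) \<otimes> x" using nc x y by (simp add: m_assoc)
  then have "x \<otimes> (x \<otimes> y) = star x \<otimes> (y \<otimes> star x) \<or> x \<otimes> (x \<otimes> y) = (x \<otimes> y) \<otimes> star x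
      \<or> x \<otimes> (x \<otimes> y) = (y \<otimes> star x) \<otimes> x"
    using noncommuting_nonsym_product[OF x _ xy] x y by (simp add: star_mult)
  moreover have "star x \<otimes> (y \<otimes> star x) = y \<otimes> (x \<otimes> star x)"
    using swap x y by (simp add: m_assoc[symmetric])
  moreover have "(y \<otimes> star x) \<otimes> x = y \<otimes> (x \<otimes> star x)"
    using nonsym_commutes_with_star[OF x] x y by (simp add: m_assoc)
  moreover have "y \<otimes> (x \<otimes> x) \<noteq> y \<otimes> (x \<otimes> star x)" using x y by simp
  moreover have "x \<otimes> (x \<otimes> y) \<noteq> (x \<otimes> y) \<otimes> star x"
    using xy x y by (simp add: m_assoc star_mult)
  ultimately show False using xxy by auto
qed

lemma conj_by_sym_cases:
  assumes x: "x \<in> carrier G" "star x \<noteq> x" and y: "y \<in> carrier G" "star y = y"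
  obtains (commute) "x \<otimes> y = y \<otimes> x" "star x \<otimes> y = y \<otimes> star x"
    | (swap) "x \<otimes> y \<noteq> y \<otimes> x" "x \<otimes> y = y \<otimes> star x" "star x \<otimes> y = y \<otimes> x"
proof -
  have x': "star x \<in> carrier G" "star (star x) \<noteq> star x" using x by auto
  have "x \<otimes> y = y \<otimes> x \<or> x \<otimes> y = y \<otimes> star x"
    using nonsym_times_sym_commutes[OF x y] x y by (auto simp: star_mult)
  moreover have "star x \<otimes> y = y \<otimes> star x \<or> star x \<otimes> y = y \<otimes> x"
    using nonsym_times_sym_commutes[OF x' y] x y by (auto simp: star_mult)
  moreover have "x \<otimes> y \<noteq> star x \<otimes> y" "y \<otimes> x \<noteq> y \<otimes> star x" using x y by auto
  ultimately show ?thesis using commute swap by metis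
qed

lemma commutators_with_sym:
  assumes x: "x \<in> carrier G" "star x \<noteq> x" and y: "y \<in> carrier G" "star y = y"
  shows "commg G x (y \<otimes> y) = \<one> \<and> commg G (x \<otimes> x) y = \<one> \<and> commg G (x \<otimes> star x) y = \<one>"
proof -
  have x': "star x \<in> carrier G" using x by simp
  have "x \<otimes> (y \<otimes> y) = (y \<otimes> y) \<otimes> x \<and> (x \<otimes> x) \<otimes> y = y \<otimes> (x \<otimes> x)
      \<and> (x \<otimes> star x) \<otimes> y = y \<otimes> (x \<otimes> star x)"
  proof (cases rule: conj_by_sym_cases[OF x y, case_names commute swap])
    case commute
    then show ?thesis using x x' y by (metis m_assoc)
  next
    case swap
    then show ?thesis using x x' y star_square_eq_square[OF x] nonsym_commutes_with_star[OF x]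
      by (metis m_assoc)
  qed
  then show ?thesis using x x' y by (simp add: commg_eq_one_iff)
qed

lemma coefficient_of_sym_basis:
  assumes x: "x \<in> carrier G" "star x \<noteq> x" and y: "y \<in> carrier G"
    and \<alpha>: "gr_basis G y \<alpha> \<in> S_mod G star \<sigma>"
  shows "\<alpha> + \<alpha> * ((if x \<otimes> y = y \<otimes> x then 1 else 0) + (if x \<otimes> y = y \<otimes> star x then \<sigma> x else 0)) = 0"
proof -
  have "gr_mult G (plus_star x) (gr_basis G y \<alpha>) (x \<otimes> y) = \<alpha>"
    using gr_mult_plus_star_basis[OF x(1) y x(2), of "x \<otimes> y" \<alpha>] x y by simp
  moreover have "gr_mult G (plus_star x) (gr_basis G y \<alpha>) (x \<otimes> y)
      + gr_mult G (gr_basis G y \<alpha>) (plus_star x) (x \<otimes> y) = 0"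
    by (intro anticommute_at plus_star_in_S_mod x \<alpha>)
  ultimately show ?thesis using gr_mult_basis_plus_star[OF x(1) y, of "x \<otimes> y" \<alpha>] x y by simp
qed

lemma conj_by_sym_properties:
  assumes x: "x \<in> carrier G" "star x \<noteq> x" and y: "y \<in> carrier G" "star y = y"
    and \<alpha>: "gr_basis G y \<alpha> \<in> S_mod G star \<sigma>"
  shows "conjg G x y \<in> {x, star x}
    \<and> (x \<otimes> y \<in> Gstar G star \<longleftrightarrow> x \<otimes> y \<noteq> y \<otimes> x)
    \<and> (x \<otimes> y \<noteq> y \<otimes> x \<longrightarrow> \<alpha> * (1 + \<sigma> x) = 0)
    \<and> (x \<otimes> y = y \<otimes> x \<longrightarrow> 2 * \<alpha> = 0)"
proof -
  have sym_xy: "x \<otimes> y \<in> Gstar G star \<longleftrightarrow> x \<otimes> y = y \<otimes> star x"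
    using x y by (auto simp: Gstar_def star_mult)
  note coeff = coefficient_of_sym_basis[OF x y(1) \<alpha>]
  show ?thesis
  proof (cases rule: conj_by_sym_cases[OF x y, case_names commute swap])
    case commute
    have ne: "x \<otimes> y \<noteq> y \<otimes> star x" using commute x y by simp
    have "\<alpha> + \<alpha> * (1 + 0) = 0"
      using coeff unfolding if_P[OF commute(1)] if_not_P[OF ne] .
    then have "2 * \<alpha> = 0" by simp
    then show ?thesis using commute sym_xy x y by (simp add: conjg_eq_iff)
  next
    case swap
    have "\<alpha> + \<alpha> * (0 + \<sigma> x) = 0"
      using coeff unfolding if_not_P[OF swap(1)] if_P[OF swap(2)] .
    then show ?thesis using swap sym_xy x y by (simp add: conjg_eq_iff distrib_left)
  qed
qed

end

theorem lemma3p9: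
  fixes G :: "('g, 'm) monoid_scheme" and star :: "'g \<Rightarrow> 'g"
    and \<sigma> :: "'g \<Rightarrow> 'r::comm_ring_1" and x y :: 'g and \<alpha> :: 'r
  assumes grp: "group G"
    and char: "(2::'r) \<noteq> 0"
    and inv: "involution_on G star"
    and hom: "unit_hom G \<sigma>"
    and nontriv: "\<exists>g\<in>carrier G. \<sigma> g \<noteq> 1"
    and compat: "\<forall>g\<in>carrier G. \<sigma> (g \<otimes>\<^bsub>G\<^esub> star g) = 1"
    and anti: "anticommutative G (S_mod G star \<sigma>)"
    and y: "y \<in> Gstar G star"
    and x: "x \<in> carrier G - Gstar G star"
    and \<alpha>: "gr_basis G y \<alpha> \<in> S_mod G star \<sigma>"
  shows "conjg G x y \<in> {x, star x}
    \<and> ((x \<otimes>\<^bsub>G\<^esub> y \<in> Gstar G star) \<longleftrightarrow> x \<otimes>\<^bsub>G\<^esub> y \<noteq> y \<otimes>\<^bsub>G\<^esub> x)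
    \<and> (x \<otimes>\<^bsub>G\<^esub> y \<noteq> y \<otimes>\<^bsub>G\<^esub> x \<longrightarrow> \<alpha> * (1 + \<sigma> x) = 0)
    \<and> (x \<otimes>\<^bsub>G\<^esub> y = y \<otimes>\<^bsub>G\<^esub> x \<longrightarrow> 2 * \<alpha> = 0)
    \<and> commg G x (y \<otimes>\<^bsub>G\<^esub> y) = \<one>\<^bsub>G\<^esub>
    \<and> commg G (x \<otimes>\<^bsub>G\<^esub> x) y = \<one>\<^bsub>G\<^esub>
    \<and> commg G (x \<otimes>\<^bsub>G\<^esub> star x) y = \<one>\<^bsub>G\<^esub>"
proof -
  interpret anticommutative_S G star \<sigma>
    using grp char inv hom anti by (simp add: anticommutative_S_def anticommutative_S_axioms_def)
  have x': "x \<in> carrier G" "star x \<noteq> x" and y': "y \<in> carrier G" "star y = y"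
    using x y by (auto simp: Gstar_def)
  show ?thesis
    using conj_by_sym_properties[OF x' y' \<alpha>] commutators_with_sym[OF x' y'] by blast
qed

end
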